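(* Let $R_1,R_2\in\mathrm{DGRings}^{0,-1}$ and let $\alpha$ be an admissible correspondence $R_1\xleftarrow{f}R_{12}\xrightarrow{g}R_2$. (i) Let $\mathrm{adm}^{-1}(\alpha)$ be the set of isomorphism classes of pairs consisting of $\varphi\in\mathrm{Hom}(R_1,R_2)$ and an isomorphism $\mathrm{adm}(\varphi)\xrightarrow{\sim}\alpha$. Then $\mathrm{adm}^{-1}(\alpha)$ canonically identifies with the set of splittings $\{s:R_1\to R_{12}\mid f\circ s=\mathrm{id}_{R_1}\}$ (morphisms in $\mathrm{DGRings}^{0,-1}$). Under this identification the map $\mathrm{adm}^{-1}(\alpha)\to\mathrm{Hom}(R_1,R_2)$ is $s\mapsto g\circ s$. (ii) The map $s\mapsto s^0$ from the set of such splittings $s$ to the set of ring homomorphisms $\sigma:R_1^0\to R_{12}^0$ with $f^0\circ\sigma=\mathrm{id}_{R_1^0}$ is bijective.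
   Context: Rings are commutative and unital. $\mathrm{DGRings}^{0,-1}$ is the category of commutative DG rings $R$ with $R^i=0$ for $i\ne 0,-1$. Equivalently, such $R$ is a ring $R^0$, an $R^0$-module $R^{-1}$ and an $R^0$-linear $d:R^{-1}\to R^0$ with $d(x)y=d(y)x$. Quasi-isomorphisms are morphisms inducing isomorphisms on $\ker d$ and $\operatorname{coker} d$. A correspondence is a diagram $R_1\xleftarrow{f}R_{12}\xrightarrow{g}R_2$ in $\mathrm{DGRings}^{0,-1}$. Morphisms of correspondences are maps $h$ of middle terms with $f'h=f$, $g'h=g$. A correspondence is admissible if $f$ is a quasi-isomorphism and $R_{12}^{-1}\to R_1^{-1}\times R_2^{-1}$ is an isomorphism. It is an anamorphism if $f$ is a surjective quasi-isomorphism. $\mathrm{Corr}_{\mathrm{adm}}(R_1,R_2)\subset\mathrm{Corr}_{\mathrm{ana}}(R_1,R_2)$ denote the full subcategories. $\mathrm{Adm}$ is the left adjoint to the inclusion (admissibilization). The map $\mathrm{adm}:\mathrm{Hom}(R_1,R_2)\to\mathrm{Corr}_{\mathrm{adm}}(R_1,R_2)$ sends $\varphi$ to $\mathrm{Adm}$ of the correspondence $R_1\xleftarrow{\mathrm{id}}R_1\xrightarrow{\varphi}R_2$. *)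

theory Defs
  imports "HOL-Algebra.Algebra" "HOL-Library.FuncSet"
begin

text \<open>An object of DGRings^{0,-1}: a ring R^0, an R^0-module R^{-1} and a map d.\<close>
record ('a, 'b) dgr =
  deg0 :: "'a ring"
  deg1 :: "('a, 'b) module"
  dd   :: "'b \<Rightarrow> 'a"

definition dgring :: "('a, 'b) dgr \<Rightarrow> bool" where
  "dgring R \<longleftrightarrow>
     cring (deg0 R) \<and> module (deg0 R) (deg1 R) \<and>
     dd R \<in> carrier (deg1 R) \<rightarrow> carrier (deg0 R) \<and>
     (\<forall>x\<in>carrier (deg1 R). \<forall>y\<in>carrier (deg1 R).
        dd R (x \<oplus>\<^bsub>deg1 R\<^esub> y) = dd R x \<oplus>\<^bsub>deg0 R\<^esub> dd R y) \<and>
     (\<forall>r\<in>carrier (deg0 R). \<forall>x\<in>carrier (deg1 R).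
        dd R (r \<odot>\<^bsub>deg1 R\<^esub> x) = r \<otimes>\<^bsub>deg0 R\<^esub> dd R x) \<and>
     (\<forall>x\<in>carrier (deg1 R). \<forall>y\<in>carrier (deg1 R).
        dd R x \<odot>\<^bsub>deg1 R\<^esub> y = dd R y \<odot>\<^bsub>deg1 R\<^esub> x)"

type_synonym ('a, 'b, 'c, 'd) dgmap = "('a \<Rightarrow> 'c) \<times> ('b \<Rightarrow> 'd)"

definition dg_hom :: "('a, 'b) dgr \<Rightarrow> ('c, 'd) dgr \<Rightarrow> ('a, 'b, 'c, 'd) dgmap \<Rightarrow> bool" where
  "dg_hom R S h \<longleftrightarrow>
     fst h \<in> ring_hom (deg0 R) (deg0 S) \<and>
     fst h \<in> extensional (carrier (deg0 R)) \<and>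
     snd h \<in> carrier (deg1 R) \<rightarrow> carrier (deg1 S) \<and>
     snd h \<in> extensional (carrier (deg1 R)) \<and>
     (\<forall>x\<in>carrier (deg1 R). \<forall>y\<in>carrier (deg1 R).
        snd h (x \<oplus>\<^bsub>deg1 R\<^esub> y) = snd h x \<oplus>\<^bsub>deg1 S\<^esub> snd h y) \<and>
     (\<forall>r\<in>carrier (deg0 R). \<forall>x\<in>carrier (deg1 R).
        snd h (r \<odot>\<^bsub>deg1 R\<^esub> x) = fst h r \<odot>\<^bsub>deg1 S\<^esub> snd h x) \<and>
     (\<forall>x\<in>carrier (deg1 R). dd S (snd h x) = fst h (dd R x))"

definition dg_id :: "('a, 'b) dgr \<Rightarrow> ('a, 'b, 'a, 'b) dgmap" where
  "dg_id R = ((\<lambda>x\<in>carrier (deg0 R). x), (\<lambda>x\<in>carrier (deg1 R). x))"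

definition dg_comp :: "('a, 'b) dgr \<Rightarrow> ('c, 'd, 'e, 'f) dgmap \<Rightarrow> ('a, 'b, 'c, 'd) dgmap
    \<Rightarrow> ('a, 'b, 'e, 'f) dgmap" where
  "dg_comp R g h = (compose (carrier (deg0 R)) (fst g) (fst h),
                    compose (carrier (deg1 R)) (snd g) (snd h))"

definition dker :: "('a, 'b) dgr \<Rightarrow> 'b set" where
  "dker R = {x \<in> carrier (deg1 R). dd R x = \<zero>\<^bsub>deg0 R\<^esub>}"

definition dim :: "('a, 'b) dgr \<Rightarrow> 'a set" where
  "dim R = dd R ` carrier (deg1 R)"

definition dcoker :: "('a, 'b) dgr \<Rightarrow> 'a set set" where
  "dcoker R = a_rcosets\<^bsub>deg0 R\<^esub> (dim R)"

definition coker_map :: "('a, 'b) dgr \<Rightarrow> ('c, 'd) dgr \<Rightarrow> ('a, 'b, 'c, 'd) dgmap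
    \<Rightarrow> 'a set \<Rightarrow> 'c set" where
  "coker_map R S h C = dim S +>\<^bsub>deg0 S\<^esub> fst h (SOME a. a \<in> C)"

definition quasi_iso :: "('a, 'b) dgr \<Rightarrow> ('c, 'd) dgr \<Rightarrow> ('a, 'b, 'c, 'd) dgmap \<Rightarrow> bool" where
  "quasi_iso R S h \<longleftrightarrow> dg_hom R S h \<and>
     bij_betw (snd h) (dker R) (dker S) \<and>
     bij_betw (coker_map R S h) (dcoker R) (dcoker S)"

definition dg_surj :: "('a, 'b) dgr \<Rightarrow> ('c, 'd) dgr \<Rightarrow> ('a, 'b, 'c, 'd) dgmap \<Rightarrow> bool" where
  "dg_surj R S h \<longleftrightarrow> fst h ` carrier (deg0 R) = carrier (deg0 S) \<and>
                       snd h ` carrier (deg1 R) = carrier (deg1 S)"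

text \<open>A correspondence R1 <-f- R12 -g-> R2 (R1, R2 given separately).\<close>
record ('m0, 'm1, 'a0, 'a1, 'b0, 'b1) corr =
  mid :: "('m0, 'm1) dgr"
  lft :: "('m0, 'm1, 'a0, 'a1) dgmap"
  rgt :: "('m0, 'm1, 'b0, 'b1) dgmap"

definition is_corr :: "('a0, 'a1) dgr \<Rightarrow> ('b0, 'b1) dgr
    \<Rightarrow> ('m0, 'm1, 'a0, 'a1, 'b0, 'b1) corr \<Rightarrow> bool" where
  "is_corr R1 R2 \<alpha> \<longleftrightarrow> dgring (mid \<alpha>) \<and> dg_hom (mid \<alpha>) R1 (lft \<alpha>) \<and> dg_hom (mid \<alpha>) R2 (rgt \<alpha>)"

definition corr_mor :: "('a0, 'a1) dgr \<Rightarrow> ('b0, 'b1) dgr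
    \<Rightarrow> ('m0, 'm1, 'a0, 'a1, 'b0, 'b1) corr \<Rightarrow> ('n0, 'n1, 'a0, 'a1, 'b0, 'b1) corr
    \<Rightarrow> ('m0, 'm1, 'n0, 'n1) dgmap \<Rightarrow> bool" where
  "corr_mor R1 R2 \<alpha> \<beta> h \<longleftrightarrow> is_corr R1 R2 \<alpha> \<and> is_corr R1 R2 \<beta> \<and>
     dg_hom (mid \<alpha>) (mid \<beta>) h \<and>
     dg_comp (mid \<alpha>) (lft \<beta>) h = lft \<alpha> \<and> dg_comp (mid \<alpha>) (rgt \<beta>) h = rgt \<alpha>"

definition corr_iso :: "('a0, 'a1) dgr \<Rightarrow> ('b0, 'b1) dgr
    \<Rightarrow> ('m0, 'm1, 'a0, 'a1, 'b0, 'b1) corr \<Rightarrow> ('n0, 'n1, 'a0, 'a1, 'b0, 'b1) corr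
    \<Rightarrow> ('m0, 'm1, 'n0, 'n1) dgmap \<Rightarrow> bool" where
  "corr_iso R1 R2 \<alpha> \<beta> h \<longleftrightarrow> corr_mor R1 R2 \<alpha> \<beta> h \<and>
     (\<exists>k. corr_mor R1 R2 \<beta> \<alpha> k \<and> dg_comp (mid \<alpha>) k h = dg_id (mid \<alpha>) \<and>
          dg_comp (mid \<beta>) h k = dg_id (mid \<beta>))"

definition is_ana_corr :: "('a0, 'a1) dgr \<Rightarrow> ('b0, 'b1) dgr
    \<Rightarrow> ('m0, 'm1, 'a0, 'a1, 'b0, 'b1) corr \<Rightarrow> bool" where
  "is_ana_corr R1 R2 \<alpha> \<longleftrightarrow> is_corr R1 R2 \<alpha> \<and>
     quasi_iso (mid \<alpha>) R1 (lft \<alpha>) \<and> dg_surj (mid \<alpha>) R1 (lft \<alpha>)"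

definition is_adm_corr :: "('a0, 'a1) dgr \<Rightarrow> ('b0, 'b1) dgr
    \<Rightarrow> ('m0, 'm1, 'a0, 'a1, 'b0, 'b1) corr \<Rightarrow> bool" where
  "is_adm_corr R1 R2 \<alpha> \<longleftrightarrow> is_corr R1 R2 \<alpha> \<and>
     quasi_iso (mid \<alpha>) R1 (lft \<alpha>) \<and>
     bij_betw (\<lambda>x. (snd (lft \<alpha>) x, snd (rgt \<alpha>) x))
       (carrier (deg1 (mid \<alpha>))) (carrier (deg1 R1) \<times> carrier (deg1 R2))"

definition graph_corr :: "('a0, 'a1) dgr \<Rightarrow> ('a0, 'a1, 'b0, 'b1) dgmap
    \<Rightarrow> ('a0, 'a1, 'a0, 'a1, 'b0, 'b1) corr" where
  "graph_corr R1 \<phi> = \<lparr>mid = R1, lft = dg_id R1, rgt = \<phi>\<rparr>"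

text \<open>Universal property of the unit eta : beta -> A of the admissibilization,
  tested against an admissible correspondence gamma: Hom(A, gamma) -> Hom(beta, gamma),
  iota |-> iota o eta, is bijective.\<close>
definition adm_universal_at :: "('a0, 'a1) dgr \<Rightarrow> ('b0, 'b1) dgr
    \<Rightarrow> ('m0, 'm1, 'a0, 'a1, 'b0, 'b1) corr \<Rightarrow> ('n0, 'n1, 'a0, 'a1, 'b0, 'b1) corr
    \<Rightarrow> ('m0, 'm1, 'n0, 'n1) dgmap \<Rightarrow> ('k0, 'k1, 'a0, 'a1, 'b0, 'b1) corr \<Rightarrow> bool" where
  "adm_universal_at R1 R2 \<beta> A \<eta> \<gamma> \<longleftrightarrow>
     (is_adm_corr R1 R2 \<gamma> \<longrightarrow>
        bij_betw (\<lambda>\<iota>. dg_comp (mid \<beta>) \<iota> \<eta>)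
          {\<iota>. corr_mor R1 R2 A \<gamma> \<iota>} {h. corr_mor R1 R2 \<beta> \<gamma> h})"

definition is_admissibilization :: "('a0, 'a1) dgr \<Rightarrow> ('b0, 'b1) dgr
    \<Rightarrow> ('m0, 'm1, 'a0, 'a1, 'b0, 'b1) corr \<Rightarrow> ('n0, 'n1, 'a0, 'a1, 'b0, 'b1) corr
    \<Rightarrow> ('m0, 'm1, 'n0, 'n1) dgmap \<Rightarrow> ('k0, 'k1, 'a0, 'a1, 'b0, 'b1) corr itself \<Rightarrow> bool" where
  "is_admissibilization R1 R2 \<beta> A \<eta> T \<longleftrightarrow>
     is_adm_corr R1 R2 A \<and> corr_mor R1 R2 \<beta> A \<eta> \<and>
     (\<forall>\<gamma> :: ('k0, 'k1, 'a0, 'a1, 'b0, 'b1) corr. adm_universal_at R1 R2 \<beta> A \<eta> \<gamma>) \<and>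
     (\<forall>\<gamma> :: ('n0, 'n1, 'a0, 'a1, 'b0, 'b1) corr. adm_universal_at R1 R2 \<beta> A \<eta> \<gamma>)"

end

theory Submission
  imports Defs
begin

text \<open>Everything rests on a lifting property: if \<open>f : M \<rightarrow> R\<close> is a quasi-isomorphism that is
  surjective in degree -1, then \<open>z \<mapsto> (f z, d z)\<close> maps \<open>M\<^sup>-\<^sup>1\<close> bijectively onto the pairs
  \<open>(p, u) \<in> R\<^sup>-\<^sup>1 \<times> M\<^sup>0\<close> with \<open>f u = d p\<close>. Injectivity is injectivity of \<open>f\<close> on \<open>ker d\<close>;
  surjectivity uses injectivity of \<open>f\<close> on \<open>coker d\<close> and surjectivity on \<open>ker d\<close>.
  Hence a ring splitting \<open>\<sigma>\<close> of \<open>f\<^sup>0\<close> extends uniquely to a splitting \<open>s\<close> of \<open>f\<close>, with \<open>s p\<close>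
  the lift of \<open>(p, \<sigma> (d p))\<close>; this is (ii).

  For (i): a morphism between admissible correspondences is bijective in degree -1, because both
  middle terms are identified with \<open>R\<^sub>1\<^sup>-\<^sup>1 \<times> R\<^sub>2\<^sup>-\<^sup>1\<close>, and then in degree 0 by the lifting
  property, so it is an isomorphism. By the universal property of \<open>Adm\<close>, isomorphisms
  \<open>adm(\<phi>) \<cong> \<alpha>\<close> thus correspond to morphisms from \<open>R\<^sub>1 \<leftarrow> R\<^sub>1 \<rightarrow> R\<^sub>2\<close> (via \<open>id, \<phi>\<close>) to \<open>\<alpha>\<close>,
  i.e. to splittings \<open>s\<close> with \<open>g \<circ> s = \<phi>\<close>; letting \<open>\<phi>\<close> vary exhausts all splittings.\<close>

locale dg_ring =
  fixes R :: "('a, 'b) dgr"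
  assumes dgring: "dgring R"
begin

sublocale deg: module "deg0 R" "deg1 R"
  using dgring by (simp add: dgring_def)

lemma d_closed [simp]: "x \<in> carrier (deg1 R) \<Longrightarrow> dd R x \<in> carrier (deg0 R)"
  using dgring by (auto simp: dgring_def)

sublocale d: abelian_group_hom "deg1 R" "deg0 R" "dd R"
  using dgring unfolding dgring_def
  by (intro abelian_group_homI group_hom.intro group_hom_axioms.intro homI
      deg.M.abelian_group_axioms deg.R.is_abelian_group deg.M.a_group deg.R.a_group) auto

lemma d_smult [simp]:
  "r \<in> carrier (deg0 R) \<Longrightarrow> x \<in> carrier (deg1 R) \<Longrightarrow>
     dd R (r \<odot>\<^bsub>deg1 R\<^esub> x) = r \<otimes>\<^bsub>deg0 R\<^esub> dd R x"
  using dgring by (simp add: dgring_def)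

lemma subgroup_image_d: "subgroup (dim R) (add_monoid (deg0 R))"
  using group_hom.img_is_subgroup[OF d.a_group_hom] by (simp add: dim_def)

lemma abelian_subgroup_image_d: "abelian_subgroup (dim R) (deg0 R)"
  using subgroup_image_d
  by (intro abelian_subgroupI3 deg.R.is_abelian_group) (simp add: additive_subgroup_def)

end

locale dg_morphism = R: dg_ring R + S: dg_ring S
  for R :: "('a, 'b) dgr" and S :: "('c, 'd) dgr" +
  fixes h :: "('a, 'b, 'c, 'd) dgmap"
  assumes dg_hom: "dg_hom R S h"
begin

sublocale h0: ring_hom_cring "deg0 R" "deg0 S" "fst h"
  using dg_hom by (intro ring_hom_cringI R.deg.R.is_cring S.deg.R.is_cring) (simp add: dg_hom_def)

sublocale h1: abelian_group_hom "deg1 R" "deg1 S" "snd h"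
  using dg_hom unfolding dg_hom_def
  by (intro abelian_group_homI group_hom.intro group_hom_axioms.intro homI
      R.deg.M.abelian_group_axioms S.deg.M.abelian_group_axioms R.deg.M.a_group S.deg.M.a_group) auto

lemma hom_smult [simp]:
  "r \<in> carrier (deg0 R) \<Longrightarrow> x \<in> carrier (deg1 R) \<Longrightarrow>
     snd h (r \<odot>\<^bsub>deg1 R\<^esub> x) = fst h r \<odot>\<^bsub>deg1 S\<^esub> snd h x"
  using dg_hom by (simp add: dg_hom_def)

lemma hom_d [simp]: "x \<in> carrier (deg1 R) \<Longrightarrow> dd S (snd h x) = fst h (dd R x)"
  using dg_hom by (simp add: dg_hom_def)

lemma extensional1: "snd h \<in> extensional (carrier (deg1 R))"
  using dg_hom by (simp add: dg_hom_def)

text \<open>\<open>coker_map\<close> picks a representative of the coset with \<open>SOME\<close>; the choice is irrelevant.\<close>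

lemma coker_map_coset:
  assumes u: "u \<in> carrier (deg0 R)"
  shows "coker_map R S h (dim R +>\<^bsub>deg0 R\<^esub> u) = dim S +>\<^bsub>deg0 S\<^esub> fst h u"
proof -
  interpret R_im: abelian_subgroup "dim R" "deg0 R" by (rule R.abelian_subgroup_image_d)
  interpret S_im: abelian_subgroup "dim S" "deg0 S" by (rule S.abelian_subgroup_image_d)
  define a where "a = (SOME a. a \<in> dim R +>\<^bsub>deg0 R\<^esub> u)"
  have "a \<in> dim R +>\<^bsub>deg0 R\<^esub> u"
    unfolding a_def using R_im.a_rcos_self[OF u] by (rule someI)
  then obtain w where w: "w \<in> carrier (deg1 R)" "a = dd R w \<oplus>\<^bsub>deg0 R\<^esub> u"
    by (auto simp: a_r_coset_def' dim_def)
  then have "fst h a = dd S (snd h w) \<oplus>\<^bsub>deg0 S\<^esub> fst h u"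
    using u by simp
  moreover have "dd S (snd h w) \<in> dim S"
    using w by (simp add: dim_def del: hom_d)
  ultimately have "fst h a \<in> dim S +>\<^bsub>deg0 S\<^esub> fst h u"
    using u by (auto simp: a_r_coset_def')
  then show ?thesis
    unfolding coker_map_def a_def[symmetric]
    using S.deg.R.a_repr_independence u S.subgroup_image_d by simp
qed

end

lemma dg_comp_eq_iff:
  assumes "fst \<phi> \<in> extensional (carrier (deg0 R))" "snd \<phi> \<in> extensional (carrier (deg1 R))"
  shows "dg_comp R g h = \<phi> \<longleftrightarrow>
           (\<forall>x\<in>carrier (deg0 R). fst g (fst h x) = fst \<phi> x) \<and>
           (\<forall>p\<in>carrier (deg1 R). snd g (snd h p) = snd \<phi> p)"
  using assms by (auto simp: dg_comp_def prod_eq_iff compose_def fun_eq_iff extensional_def)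

lemma dg_comp_eq_id_iff:
  "dg_comp R g h = dg_id R \<longleftrightarrow>
     (\<forall>x\<in>carrier (deg0 R). fst g (fst h x) = x) \<and> (\<forall>p\<in>carrier (deg1 R). snd g (snd h p) = p)"
  by (subst dg_comp_eq_iff) (auto simp: dg_id_def)

lemma (in dg_ring) dg_hom_id: "dg_hom R R (dg_id R)"
  unfolding dg_hom_def dg_id_def by (auto intro!: ring_hom_memI)

lemma dg_hom_comp:
  assumes "dg_morphism R S g" "dg_morphism T R h"
  shows "dg_hom T S (dg_comp T g h)"
proof -
  interpret g: dg_morphism R S g by fact
  interpret h: dg_morphism T R h by fact
  show ?thesis
    unfolding dg_hom_def
    by (auto intro!: ring_hom_memI simp: dg_comp_def compose_def)
qed

locale dg_quasi_iso = dg_morphism +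
  assumes quasi_iso: "quasi_iso R S h"
begin

lemma kernel_lift:
  assumes u: "u \<in> carrier (deg0 R)" and hu: "fst h u = \<zero>\<^bsub>deg0 S\<^esub>"
  shows "\<exists>z\<in>carrier (deg1 R). snd h z = \<zero>\<^bsub>deg1 S\<^esub> \<and> dd R z = u"
proof -
  interpret R_im: abelian_subgroup "dim R" "deg0 R" by (rule R.abelian_subgroup_image_d)
  have im_sub: "dim R \<subseteq> carrier (deg0 R)" by (auto simp: dim_def)
  have "dim R +>\<^bsub>deg0 R\<^esub> u = dim R +>\<^bsub>deg0 R\<^esub> \<zero>\<^bsub>deg0 R\<^esub>"
  proof (rule inj_onD)
    show "inj_on (coker_map R S h) (dcoker R)"
      using quasi_iso by (simp add: quasi_iso_def bij_betw_def)
    show "coker_map R S h (dim R +>\<^bsub>deg0 R\<^esub> u) = coker_map R S h (dim R +>\<^bsub>deg0 R\<^esub> \<zero>\<^bsub>deg0 R\<^esub>)"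
      using u hu by (simp add: coker_map_coset)
    show "dim R +>\<^bsub>deg0 R\<^esub> u \<in> dcoker R"
      unfolding dcoker_def by (rule R.deg.R.a_rcosetsI[OF im_sub u])
    show "dim R +>\<^bsub>deg0 R\<^esub> \<zero>\<^bsub>deg0 R\<^esub> \<in> dcoker R"
      unfolding dcoker_def by (rule R.deg.R.a_rcosetsI[OF im_sub R.deg.R.zero_closed])
  qed
  then have "u \<in> dim R"
    using R_im.a_rcos_self[OF u] im_sub by simp
  then obtain w where w: "w \<in> carrier (deg1 R)" "dd R w = u" by (auto simp: dim_def)
  then have "snd h w \<in> dker S" using hu by (simp add: dker_def)
  moreover have "snd h ` dker R = dker S"
    using quasi_iso by (simp add: quasi_iso_def bij_betw_def)
  ultimately obtain w' where w': "w' \<in> dker R" "snd h w' = snd h w"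
    by (metis imageE)
  show ?thesis
    by (rule bexI[of _ "w \<ominus>\<^bsub>deg1 R\<^esub> w'"]) (use w w' in \<open>auto simp: dker_def a_minus_def S.deg.M.r_neg\<close>)
qed

lemma lift_unique:
  assumes z: "z \<in> carrier (deg1 R)" "z' \<in> carrier (deg1 R)"
    and eq: "snd h z = snd h z'" "dd R z = dd R z'"
  shows "z = z'"
proof -
  have "z \<ominus>\<^bsub>deg1 R\<^esub> z' = \<zero>\<^bsub>deg1 R\<^esub>"
  proof (rule inj_onD)
    show "inj_on (snd h) (dker R)"
      using quasi_iso by (simp add: quasi_iso_def bij_betw_def)
    show "snd h (z \<ominus>\<^bsub>deg1 R\<^esub> z') = snd h \<zero>\<^bsub>deg1 R\<^esub>"
      using z eq by (simp add: a_minus_def S.deg.M.r_neg)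
    show "z \<ominus>\<^bsub>deg1 R\<^esub> z' \<in> dker R" "\<zero>\<^bsub>deg1 R\<^esub> \<in> dker R"
      using z eq by (simp_all add: dker_def a_minus_def R.deg.R.r_neg)
  qed
  then show ?thesis
    using z R.deg.M.minus_equality[of z "\<ominus>\<^bsub>deg1 R\<^esub> z'"] by (simp add: a_minus_def)
qed

end

locale surj_quasi_iso = dg_quasi_iso +
  assumes surj1: "snd h ` carrier (deg1 R) = carrier (deg1 S)"
begin

lemma surj0: "fst h ` carrier (deg0 R) = carrier (deg0 S)"
proof
  show "fst h ` carrier (deg0 R) \<subseteq> carrier (deg0 S)" by auto
  show "carrier (deg0 S) \<subseteq> fst h ` carrier (deg0 R)"
  proof
    fix a assume a: "a \<in> carrier (deg0 S)"
    interpret S_im: abelian_subgroup "dim S" "deg0 S" by (rule S.abelian_subgroup_image_d)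
    have "dim S \<subseteq> carrier (deg0 S)" by (auto simp: dim_def)
    then have "dim S +>\<^bsub>deg0 S\<^esub> a \<in> coker_map R S h ` dcoker R"
      using quasi_iso S.deg.R.a_rcosetsI a by (simp add: quasi_iso_def bij_betw_def dcoker_def)
    then obtain C where C: "C \<in> dcoker R" "dim S +>\<^bsub>deg0 S\<^esub> a = coker_map R S h C"
      by blast
    then obtain u where u: "u \<in> carrier (deg0 R)" "C = dim R +>\<^bsub>deg0 R\<^esub> u"
      by (auto simp: dcoker_def A_RCOSETS_def')
    have "a \<in> dim S +>\<^bsub>deg0 S\<^esub> fst h u"
      using S_im.a_rcos_self[OF a] C(2) u by (simp add: coker_map_coset)
    then obtain p where p: "p \<in> carrier (deg1 S)" "a = dd S p \<oplus>\<^bsub>deg0 S\<^esub> fst h u"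
      by (auto simp: a_r_coset_def' dim_def)
    obtain z where z: "z \<in> carrier (deg1 R)" "snd h z = p"
      using surj1 p(1) by (metis imageE)
    have "a = fst h (dd R z) \<oplus>\<^bsub>deg0 S\<^esub> fst h u"
      using p(2) z hom_d[of z] by simp
    also have "\<dots> = fst h (dd R z \<oplus>\<^bsub>deg0 R\<^esub> u)"
      using z u by simp
    finally show "a \<in> fst h ` carrier (deg0 R)"
      using z u by (metis R.deg.R.a_closed R.d_closed image_eqI)
  qed
qed

lemma lift_exists:
  assumes p: "p \<in> carrier (deg1 S)" and u: "u \<in> carrier (deg0 R)" and hu: "fst h u = dd S p"
  shows "\<exists>z\<in>carrier (deg1 R). snd h z = p \<and> dd R z = u"
proof -
  obtain z0 where z0: "z0 \<in> carrier (deg1 R)" "snd h z0 = p"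
    using surj1 p by (metis imageE)
  have "fst h (u \<ominus>\<^bsub>deg0 R\<^esub> dd R z0) = \<zero>\<^bsub>deg0 S\<^esub>"
    using u z0 hu hom_d[of z0] by simp
  then obtain k where k: "k \<in> carrier (deg1 R)" "snd h k = \<zero>\<^bsub>deg1 S\<^esub>" "dd R k = u \<ominus>\<^bsub>deg0 R\<^esub> dd R z0"
    using kernel_lift[of "u \<ominus>\<^bsub>deg0 R\<^esub> dd R z0"] u z0 by auto
  show ?thesis
  proof (intro bexI conjI)
    show "z0 \<oplus>\<^bsub>deg1 R\<^esub> k \<in> carrier (deg1 R)" "snd h (z0 \<oplus>\<^bsub>deg1 R\<^esub> k) = p"
      using z0 k p by simp_all
    show "dd R (z0 \<oplus>\<^bsub>deg1 R\<^esub> k) = u"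
      using z0 k u R.deg.R.a_comm[of u "\<ominus>\<^bsub>deg0 R\<^esub> dd R z0"]
      by (simp add: a_minus_def R.deg.R.r_neg2)
  qed
qed

definition lift :: "'d \<Rightarrow> 'a \<Rightarrow> 'b" where
  "lift p u = (THE z. z \<in> carrier (deg1 R) \<and> snd h z = p \<and> dd R z = u)"

lemma lift:
  assumes "p \<in> carrier (deg1 S)" "u \<in> carrier (deg0 R)" "fst h u = dd S p"
  shows lift_closed: "lift p u \<in> carrier (deg1 R)"
    and h_lift: "snd h (lift p u) = p"
    and d_lift: "dd R (lift p u) = u"
proof -
  obtain z where z: "z \<in> carrier (deg1 R)" "snd h z = p" "dd R z = u"
    using lift_exists[OF assms] by blast
  have "lift p u = z"
    unfolding lift_def
  proof (rule the_equality)
    show "z \<in> carrier (deg1 R) \<and> snd h z = p \<and> dd R z = u" using z by blast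
    show "z' = z" if "z' \<in> carrier (deg1 R) \<and> snd h z' = p \<and> dd R z' = u" for z'
      using that z lift_unique[of z' z] by simp
  qed
  with z show "lift p u \<in> carrier (deg1 R)" "snd h (lift p u) = p" "dd R (lift p u) = u"
    by simp_all
qed

lemma lift_h_d:
  assumes z: "z \<in> carrier (deg1 R)"
  shows "lift (snd h z) (dd R z) = z"
proof -
  have "snd h z \<in> carrier (deg1 S)" "dd R z \<in> carrier (deg0 R)" "fst h (dd R z) = dd S (snd h z)"
    using z by simp_all
  from lift[OF this] z show ?thesis
    by (intro lift_unique) simp_all
qed

lemma lift_add:
  assumes pu: "p \<in> carrier (deg1 S)" "u \<in> carrier (deg0 R)" "fst h u = dd S p"
    and qv: "q \<in> carrier (deg1 S)" "v \<in> carrier (deg0 R)" "fst h v = dd S q"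
  shows "lift (p \<oplus>\<^bsub>deg1 S\<^esub> q) (u \<oplus>\<^bsub>deg0 R\<^esub> v) = lift p u \<oplus>\<^bsub>deg1 R\<^esub> lift q v"
proof -
  let ?z = "lift p u \<oplus>\<^bsub>deg1 R\<^esub> lift q v"
  note l = lift[OF pu] lift[OF qv]
  have "?z \<in> carrier (deg1 R)" and h_z: "snd h ?z = p \<oplus>\<^bsub>deg1 S\<^esub> q" and d_z: "dd R ?z = u \<oplus>\<^bsub>deg0 R\<^esub> v"
    using l by simp_all
  from lift_h_d[OF this(1)] show ?thesis
    unfolding h_z d_z .
qed

lemma lift_smult:
  assumes pu: "p \<in> carrier (deg1 S)" "u \<in> carrier (deg0 R)" "fst h u = dd S p"
    and r: "r \<in> carrier (deg0 R)"
  shows "lift (fst h r \<odot>\<^bsub>deg1 S\<^esub> p) (r \<otimes>\<^bsub>deg0 R\<^esub> u) = r \<odot>\<^bsub>deg1 R\<^esub> lift p u"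
proof -
  let ?z = "r \<odot>\<^bsub>deg1 R\<^esub> lift p u"
  note l = lift[OF pu]
  have "?z \<in> carrier (deg1 R)" and h_z: "snd h ?z = fst h r \<odot>\<^bsub>deg1 S\<^esub> p" and d_z: "dd R ?z = r \<otimes>\<^bsub>deg0 R\<^esub> u"
    using l r by simp_all
  from lift_h_d[OF this(1)] show ?thesis
    unfolding h_z d_z .
qed

end

definition dg_sections ::
    "('m0, 'm1) dgr \<Rightarrow> ('a0, 'a1) dgr \<Rightarrow> ('m0, 'm1, 'a0, 'a1) dgmap \<Rightarrow> ('a0, 'a1, 'm0, 'm1) dgmap set"
  where "dg_sections M R f = {s. dg_hom R M s \<and> dg_comp R f s = dg_id R}"

definition ring_sections :: "'m ring \<Rightarrow> 'a ring \<Rightarrow> ('m \<Rightarrow> 'a) \<Rightarrow> ('a \<Rightarrow> 'm) set"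
  where "ring_sections M R f =
    {\<sigma>. \<sigma> \<in> ring_hom R M \<and> \<sigma> \<in> extensional (carrier R) \<and>
         compose (carrier R) f \<sigma> = (\<lambda>x\<in>carrier R. x)}"

context surj_quasi_iso
begin

lemma dg_sectionD:
  assumes "s \<in> dg_sections R S h"
  shows "dg_morphism S R s"
    and "x \<in> carrier (deg0 S) \<Longrightarrow> fst h (fst s x) = x"
    and "p \<in> carrier (deg1 S) \<Longrightarrow> snd h (snd s p) = p"
  using assms
  by (auto simp: dg_sections_def dg_comp_eq_id_iff
      intro: dg_morphism.intro S.dg_ring_axioms R.dg_ring_axioms dg_morphism_axioms.intro)

lemma dg_section_eqI:
  assumes s: "s \<in> dg_sections R S h" and s': "s' \<in> dg_sections R S h" and eq: "fst s = fst s'"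
  shows "s = s'"
proof -
  interpret s: dg_morphism S R s by (rule dg_sectionD(1)[OF s])
  interpret s': dg_morphism S R s' by (rule dg_sectionD(1)[OF s'])
  have "snd s p = snd s' p" for p
  proof (cases "p \<in> carrier (deg1 S)")
    case True
    show ?thesis
    proof (rule lift_unique)
      show "snd h (snd s p) = snd h (snd s' p)"
        using dg_sectionD(3)[OF s True] dg_sectionD(3)[OF s' True] by simp
      show "dd R (snd s p) = dd R (snd s' p)"
        using True eq by simp
    qed (use True in simp_all)
  next
    case False
    then show ?thesis
      using s.extensional1 s'.extensional1 by (simp add: extensional_def)
  qed
  with eq show "s = s'" by (simp add: prod_eq_iff fun_eq_iff)
qed

lemma ring_section_extends:
  assumes \<sigma>: "\<sigma> \<in> ring_sections (deg0 R) (deg0 S) (fst h)"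
  shows "(\<sigma>, \<lambda>p\<in>carrier (deg1 S). lift p (\<sigma> (dd S p))) \<in> dg_sections R S h"
proof -
  have \<sigma>_hom: "\<sigma> \<in> ring_hom (deg0 S) (deg0 R)" and \<sigma>_ext: "\<sigma> \<in> extensional (carrier (deg0 S))"
    and \<sigma>_id: "compose (carrier (deg0 S)) (fst h) \<sigma> = (\<lambda>x\<in>carrier (deg0 S). x)"
    using \<sigma> by (simp_all add: ring_sections_def)
  interpret \<sigma>: ring_hom_cring "deg0 S" "deg0 R" \<sigma>
    by (intro ring_hom_cringI S.deg.R.is_cring R.deg.R.is_cring \<sigma>_hom)
  have \<sigma>_right [simp]: "fst h (\<sigma> x) = x" if "x \<in> carrier (deg0 S)" for x
    using fun_cong[OF \<sigma>_id, of x] that by (simp add: compose_eq)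
  define s1 where "s1 = (\<lambda>p\<in>carrier (deg1 S). lift p (\<sigma> (dd S p)))"
  have s1 [simp]: "s1 p \<in> carrier (deg1 R)" "snd h (s1 p) = p" "dd R (s1 p) = \<sigma> (dd S p)"
    if "p \<in> carrier (deg1 S)" for p
    using that by (simp_all add: s1_def lift)
  have "dg_hom S R (\<sigma>, s1)"
    unfolding dg_hom_def fst_conv snd_conv
  proof (intro conjI ballI \<sigma>_hom \<sigma>_ext)
    show "s1 \<in> carrier (deg1 S) \<rightarrow> carrier (deg1 R)" by simp
    show "s1 \<in> extensional (carrier (deg1 S))" by (simp add: s1_def)
    show "s1 (p \<oplus>\<^bsub>deg1 S\<^esub> q) = s1 p \<oplus>\<^bsub>deg1 R\<^esub> s1 q"
      if "p \<in> carrier (deg1 S)" "q \<in> carrier (deg1 S)" for p q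
      using that lift_add[of p "\<sigma> (dd S p)" q "\<sigma> (dd S q)"] by (simp add: s1_def)
    show "s1 (r \<odot>\<^bsub>deg1 S\<^esub> p) = \<sigma> r \<odot>\<^bsub>deg1 R\<^esub> s1 p"
      if "r \<in> carrier (deg0 S)" "p \<in> carrier (deg1 S)" for r p
      using that lift_smult[of p "\<sigma> (dd S p)" "\<sigma> r"] by (simp add: s1_def)
    show "dd R (s1 p) = \<sigma> (dd S p)" if "p \<in> carrier (deg1 S)" for p
      using that by simp
  qed
  moreover have "dg_comp S h (\<sigma>, s1) = dg_id S"
    by (simp add: dg_comp_eq_id_iff)
  ultimately show ?thesis
    by (simp add: dg_sections_def s1_def)
qed

lemma bij_betw_fst_dg_sections:
  "bij_betw fst (dg_sections R S h) (ring_sections (deg0 R) (deg0 S) (fst h))"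
proof (rule bij_betw_imageI)
  show "inj_on fst (dg_sections R S h)"
    by (auto intro: inj_onI dg_section_eqI)
  show "fst ` dg_sections R S h = ring_sections (deg0 R) (deg0 S) (fst h)"
  proof (intro equalityI subsetI)
    fix \<sigma> assume "\<sigma> \<in> fst ` dg_sections R S h"
    then show "\<sigma> \<in> ring_sections (deg0 R) (deg0 S) (fst h)"
      by (auto simp: dg_sections_def ring_sections_def dg_hom_def dg_comp_def dg_id_def)
  next
    fix \<sigma> assume "\<sigma> \<in> ring_sections (deg0 R) (deg0 S) (fst h)"
    from ring_section_extends[OF this] show "\<sigma> \<in> fst ` dg_sections R S h"
      by (rule rev_image_eqI) simp
  qed
qed

end

definition dg_inv :: "('a, 'b) dgr \<Rightarrow> ('c, 'd) dgr \<Rightarrow> ('a, 'b, 'c, 'd) dgmap \<Rightarrow> ('c, 'd, 'a, 'b) dgmap"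
  where "dg_inv R S h =
    ((\<lambda>y\<in>carrier (deg0 S). inv_into (carrier (deg0 R)) (fst h) y),
     (\<lambda>q\<in>carrier (deg1 S). inv_into (carrier (deg1 R)) (snd h) q))"

locale dg_iso = dg_morphism +
  assumes bij0: "bij_betw (fst h) (carrier (deg0 R)) (carrier (deg0 S))"
    and bij1: "bij_betw (snd h) (carrier (deg1 R)) (carrier (deg1 S))"
begin

lemma inv_extensional:
  "fst (dg_inv R S h) \<in> extensional (carrier (deg0 S))"
  "snd (dg_inv R S h) \<in> extensional (carrier (deg1 S))"
  unfolding dg_inv_def by simp_all

lemma inv_closed [simp]:
  "y \<in> carrier (deg0 S) \<Longrightarrow> fst (dg_inv R S h) y \<in> carrier (deg0 R)"
  "q \<in> carrier (deg1 S) \<Longrightarrow> snd (dg_inv R S h) q \<in> carrier (deg1 R)"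
  using bij_betwE[OF bij_betw_inv_into[OF bij0]] bij_betwE[OF bij_betw_inv_into[OF bij1]]
  by (simp_all add: dg_inv_def)

lemma inv_right [simp]:
  "y \<in> carrier (deg0 S) \<Longrightarrow> fst h (fst (dg_inv R S h) y) = y"
  "q \<in> carrier (deg1 S) \<Longrightarrow> snd h (snd (dg_inv R S h) q) = q"
  using bij_betw_inv_into_right[OF bij0] bij_betw_inv_into_right[OF bij1]
  by (simp_all add: dg_inv_def)

lemma inv_left [simp]:
  "x \<in> carrier (deg0 R) \<Longrightarrow> fst (dg_inv R S h) (fst h x) = x"
  "p \<in> carrier (deg1 R) \<Longrightarrow> snd (dg_inv R S h) (snd h p) = p"
  using bij_betw_inv_into_left[OF bij0] bij_betw_inv_into_left[OF bij1]
  by (simp_all add: dg_inv_def)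

lemma dg_hom_inv: "dg_hom S R (dg_inv R S h)"
proof -
  have inj0: "inj_on (fst h) (carrier (deg0 R))" and inj1: "inj_on (snd h) (carrier (deg1 R))"
    using bij0 bij1 by (simp_all add: bij_betw_def)
  show ?thesis
    unfolding dg_hom_def
  proof (intro conjI ballI ring_hom_memI)
    show "fst (dg_inv R S h) (x \<otimes>\<^bsub>deg0 S\<^esub> y) = fst (dg_inv R S h) x \<otimes>\<^bsub>deg0 R\<^esub> fst (dg_inv R S h) y"
      and "fst (dg_inv R S h) (x \<oplus>\<^bsub>deg0 S\<^esub> y) = fst (dg_inv R S h) x \<oplus>\<^bsub>deg0 R\<^esub> fst (dg_inv R S h) y"
      if "x \<in> carrier (deg0 S)" "y \<in> carrier (deg0 S)" for x y
      by (rule inj_onD[OF inj0]; use that in simp)+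
    show "fst (dg_inv R S h) \<one>\<^bsub>deg0 S\<^esub> = \<one>\<^bsub>deg0 R\<^esub>"
      by (rule inj_onD[OF inj0]) simp_all
    show "snd (dg_inv R S h) (p \<oplus>\<^bsub>deg1 S\<^esub> q) = snd (dg_inv R S h) p \<oplus>\<^bsub>deg1 R\<^esub> snd (dg_inv R S h) q"
      if "p \<in> carrier (deg1 S)" "q \<in> carrier (deg1 S)" for p q
      by (rule inj_onD[OF inj1]) (use that in simp_all)
    show "snd (dg_inv R S h) (r \<odot>\<^bsub>deg1 S\<^esub> p) = fst (dg_inv R S h) r \<odot>\<^bsub>deg1 R\<^esub> snd (dg_inv R S h) p"
      if "r \<in> carrier (deg0 S)" "p \<in> carrier (deg1 S)" for r p
      by (rule inj_onD[OF inj1]) (use that in simp_all)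
    show "dd R (snd (dg_inv R S h) p) = fst (dg_inv R S h) (dd S p)" if "p \<in> carrier (deg1 S)" for p
      by (rule inj_onD[OF inj0]) (use that hom_d[of "snd (dg_inv R S h) p"] in simp_all)
  qed (simp_all add: inv_extensional)
qed

lemma dg_comp_inv_left: "dg_comp R (dg_inv R S h) h = dg_id R"
  and dg_comp_inv_right: "dg_comp S h (dg_inv R S h) = dg_id S"
  by (simp_all add: dg_comp_eq_id_iff)

end

lemma is_corr_morphisms:
  assumes "is_corr R1 R2 \<alpha>" "dgring R1" "dgring R2"
  shows "dg_morphism (mid \<alpha>) R1 (lft \<alpha>)" "dg_morphism (mid \<alpha>) R2 (rgt \<alpha>)"
  using assms by (simp_all add: is_corr_def dg_morphism_def dg_morphism_axioms_def dg_ring_def)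

lemma adm_corr_surj_quasi_iso:
  assumes R1: "dgring R1" and R2: "dgring R2" and \<gamma>: "is_adm_corr R1 R2 \<gamma>"
  shows "surj_quasi_iso (mid \<gamma>) R1 (lft \<gamma>)"
proof -
  have corr: "is_corr R1 R2 \<gamma>" and qi: "quasi_iso (mid \<gamma>) R1 (lft \<gamma>)"
    and pair: "bij_betw (\<lambda>x. (snd (lft \<gamma>) x, snd (rgt \<gamma>) x))
                 (carrier (deg1 (mid \<gamma>))) (carrier (deg1 R1) \<times> carrier (deg1 R2))"
    using \<gamma> by (simp_all add: is_adm_corr_def)
  have f: "dg_morphism (mid \<gamma>) R1 (lft \<gamma>)"
    using is_corr_morphisms(1)[OF corr R1 R2] .
  interpret f: dg_morphism "mid \<gamma>" R1 "lft \<gamma>" by (rule f)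
  interpret R2: dg_ring R2 by (rule dg_ring.intro[OF R2])
  have "snd (lft \<gamma>) ` carrier (deg1 (mid \<gamma>)) = carrier (deg1 R1)"
  proof (intro equalityI subsetI)
    fix y assume "y \<in> snd (lft \<gamma>) ` carrier (deg1 (mid \<gamma>))"
    then show "y \<in> carrier (deg1 R1)"
      by auto
  next
    fix y assume "y \<in> carrier (deg1 R1)"
    then have "(y, \<zero>\<^bsub>deg1 R2\<^esub>) \<in> (\<lambda>x. (snd (lft \<gamma>) x, snd (rgt \<gamma>) x)) ` carrier (deg1 (mid \<gamma>))"
      using pair R2.deg.M.zero_closed by (simp add: bij_betw_def)
    then obtain x where "x \<in> carrier (deg1 (mid \<gamma>))" "y = snd (lft \<gamma>) x"
      by blast
    then show "y \<in> snd (lft \<gamma>) ` carrier (deg1 (mid \<gamma>))"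
      by blast
  qed
  with f qi show ?thesis
    by (intro surj_quasi_iso.intro dg_quasi_iso.intro surj_quasi_iso_axioms.intro
        dg_quasi_iso_axioms.intro)
qed

lemma corr_morD:
  assumes h: "corr_mor R1 R2 \<beta> \<gamma> h"
  shows "dg_morphism (mid \<beta>) (mid \<gamma>) h"
    and "x \<in> carrier (deg0 (mid \<beta>)) \<Longrightarrow> fst (lft \<gamma>) (fst h x) = fst (lft \<beta>) x"
    and "p \<in> carrier (deg1 (mid \<beta>)) \<Longrightarrow> snd (lft \<gamma>) (snd h p) = snd (lft \<beta>) p"
    and "x \<in> carrier (deg0 (mid \<beta>)) \<Longrightarrow> fst (rgt \<gamma>) (fst h x) = fst (rgt \<beta>) x"
    and "p \<in> carrier (deg1 (mid \<beta>)) \<Longrightarrow> snd (rgt \<gamma>) (snd h p) = snd (rgt \<beta>) p"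
proof -
  have hom: "dg_hom (mid \<beta>) R1 (lft \<beta>)" "dg_hom (mid \<beta>) R2 (rgt \<beta>)"
    and comp: "dg_comp (mid \<beta>) (lft \<gamma>) h = lft \<beta>" "dg_comp (mid \<beta>) (rgt \<gamma>) h = rgt \<beta>"
    using h by (simp_all add: corr_mor_def is_corr_def)
  have ext: "fst (lft \<beta>) \<in> extensional (carrier (deg0 (mid \<beta>)))"
    "snd (lft \<beta>) \<in> extensional (carrier (deg1 (mid \<beta>)))"
    "fst (rgt \<beta>) \<in> extensional (carrier (deg0 (mid \<beta>)))"
    "snd (rgt \<beta>) \<in> extensional (carrier (deg1 (mid \<beta>)))"
    using hom by (simp_all add: dg_hom_def)
  from comp(1) show "x \<in> carrier (deg0 (mid \<beta>)) \<Longrightarrow> fst (lft \<gamma>) (fst h x) = fst (lft \<beta>) x"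
    and "p \<in> carrier (deg1 (mid \<beta>)) \<Longrightarrow> snd (lft \<gamma>) (snd h p) = snd (lft \<beta>) p"
    unfolding dg_comp_eq_iff[OF ext(1,2)] by blast+
  from comp(2) show "x \<in> carrier (deg0 (mid \<beta>)) \<Longrightarrow> fst (rgt \<gamma>) (fst h x) = fst (rgt \<beta>) x"
    and "p \<in> carrier (deg1 (mid \<beta>)) \<Longrightarrow> snd (rgt \<gamma>) (snd h p) = snd (rgt \<beta>) p"
    unfolding dg_comp_eq_iff[OF ext(3,4)] by blast+
  show "dg_morphism (mid \<beta>) (mid \<gamma>) h"
    using h by (simp add: corr_mor_def is_corr_def dg_morphism_def dg_morphism_axioms_def dg_ring_def)
qed

lemma adm_corr_mor_bij1:
  assumes \<beta>: "is_adm_corr R1 R2 \<beta>" and \<gamma>: "is_adm_corr R1 R2 \<gamma>" and h: "corr_mor R1 R2 \<beta> \<gamma> h"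
  shows "bij_betw (snd h) (carrier (deg1 (mid \<beta>))) (carrier (deg1 (mid \<gamma>)))"
proof -
  interpret h: dg_morphism "mid \<beta>" "mid \<gamma>" h by (rule corr_morD(1)[OF h])
  have pair_\<beta>: "bij_betw (\<lambda>x. (snd (lft \<beta>) x, snd (rgt \<beta>) x))
      (carrier (deg1 (mid \<beta>))) (carrier (deg1 R1) \<times> carrier (deg1 R2))"
    and pair_\<gamma>: "bij_betw (\<lambda>x. (snd (lft \<gamma>) x, snd (rgt \<gamma>) x))
      (carrier (deg1 (mid \<gamma>))) (carrier (deg1 R1) \<times> carrier (deg1 R2))"
    using \<beta> \<gamma> by (simp_all add: is_adm_corr_def)
  have "bij_betw ((\<lambda>x. (snd (lft \<gamma>) x, snd (rgt \<gamma>) x)) \<circ> snd h)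
      (carrier (deg1 (mid \<beta>))) (carrier (deg1 R1) \<times> carrier (deg1 R2))"
    using pair_\<beta> by (rule bij_betw_cong[THEN iffD1, rotated]) (simp add: corr_morD[OF h])
  then show ?thesis
    using bij_betw_comp_iff2[OF pair_\<gamma>, of "snd h" "carrier (deg1 (mid \<beta>))"] h.h1.hom_closed
    by blast
qed

lemma adm_corr_mor_bij0:
  assumes R1: "dgring R1" and R2: "dgring R2"
    and \<beta>: "is_adm_corr R1 R2 \<beta>" and \<gamma>: "is_adm_corr R1 R2 \<gamma>" and h: "corr_mor R1 R2 \<beta> \<gamma> h"
  shows "bij_betw (fst h) (carrier (deg0 (mid \<beta>))) (carrier (deg0 (mid \<gamma>)))"
proof -
  interpret \<beta>: surj_quasi_iso "mid \<beta>" R1 "lft \<beta>" by (rule adm_corr_surj_quasi_iso[OF R1 R2 \<beta>])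
  interpret \<gamma>: surj_quasi_iso "mid \<gamma>" R1 "lft \<gamma>" by (rule adm_corr_surj_quasi_iso[OF R1 R2 \<gamma>])
  interpret h: dg_morphism "mid \<beta>" "mid \<gamma>" h by (rule corr_morD(1)[OF h])
  note h_lft = corr_morD(2,3)[OF h]
  note bij1 = adm_corr_mor_bij1[OF \<beta> \<gamma> h]
  have "inj_on (fst h) (carrier (deg0 (mid \<beta>)))"
  proof (rule inj_onI)
    fix x y assume x: "x \<in> carrier (deg0 (mid \<beta>))" "y \<in> carrier (deg0 (mid \<beta>))" and eq: "fst h x = fst h y"
    define w where "w = x \<ominus>\<^bsub>deg0 (mid \<beta>)\<^esub> y"
    have w: "w \<in> carrier (deg0 (mid \<beta>))" "fst h w = \<zero>\<^bsub>deg0 (mid \<gamma>)\<^esub>"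
      using x eq by (simp_all add: w_def)
    then have "fst (lft \<beta>) w = \<zero>\<^bsub>deg0 R1\<^esub>"
      using h_lft(1)[of w] by simp
    then obtain z where z: "z \<in> carrier (deg1 (mid \<beta>))" "snd (lft \<beta>) z = \<zero>\<^bsub>deg1 R1\<^esub>" "dd (mid \<beta>) z = w"
      using \<beta>.kernel_lift[OF w(1)] by blast
    have "snd h z = \<zero>\<^bsub>deg1 (mid \<gamma>)\<^esub>"
    proof (rule \<gamma>.lift_unique)
      show "snd (lft \<gamma>) (snd h z) = snd (lft \<gamma>) \<zero>\<^bsub>deg1 (mid \<gamma>)\<^esub>"
        using h_lft(2)[OF z(1)] z(2) by simp
      show "dd (mid \<gamma>) (snd h z) = dd (mid \<gamma>) \<zero>\<^bsub>deg1 (mid \<gamma>)\<^esub>"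
        using z w by simp
    qed (use z in simp_all)
    then have "z = \<zero>\<^bsub>deg1 (mid \<beta>)\<^esub>"
      using z(1) by (intro inj_onD[OF bij_betw_imp_inj_on[OF bij1]]) simp_all
    then have "w = \<zero>\<^bsub>deg0 (mid \<beta>)\<^esub>"
      using z(3) by simp
    then show "x = y"
      using x by (simp add: w_def)
  qed
  moreover have "fst h ` carrier (deg0 (mid \<beta>)) = carrier (deg0 (mid \<gamma>))"
  proof (intro equalityI subsetI)
    fix v assume "v \<in> fst h ` carrier (deg0 (mid \<beta>))"
    then show "v \<in> carrier (deg0 (mid \<gamma>))"
      using h.h0.hom_closed by blast
  next
    fix v assume v: "v \<in> carrier (deg0 (mid \<gamma>))"
    then have "fst (lft \<gamma>) v \<in> fst (lft \<beta>) ` carrier (deg0 (mid \<beta>))"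
      using \<beta>.surj0 by simp
    then obtain u where u: "u \<in> carrier (deg0 (mid \<beta>))" "fst (lft \<gamma>) v = fst (lft \<beta>) u"
      by blast
    define t where "t = v \<ominus>\<^bsub>deg0 (mid \<gamma>)\<^esub> fst h u"
    have t: "t \<in> carrier (deg0 (mid \<gamma>))" "fst (lft \<gamma>) t = \<zero>\<^bsub>deg0 R1\<^esub>"
      using v u h_lft(1)[OF u(1)] by (simp_all add: t_def)
    then obtain z where z: "z \<in> carrier (deg1 (mid \<gamma>))" "dd (mid \<gamma>) z = t"
      using \<gamma>.kernel_lift[OF t] by blast
    have "z \<in> snd h ` carrier (deg1 (mid \<beta>))"
      using bij1 z(1) by (simp add: bij_betw_def)
    then obtain z' where z': "z' \<in> carrier (deg1 (mid \<beta>))" "snd h z' = z"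
      by blast
    have closed: "u \<oplus>\<^bsub>deg0 (mid \<beta>)\<^esub> dd (mid \<beta>) z' \<in> carrier (deg0 (mid \<beta>))"
      by (intro \<beta>.R.deg.R.a_closed \<beta>.R.d_closed u(1) z'(1))
    have "fst h (u \<oplus>\<^bsub>deg0 (mid \<beta>)\<^esub> dd (mid \<beta>) z') = fst h u \<oplus>\<^bsub>deg0 (mid \<gamma>)\<^esub> t"
      using u z' z h.hom_d[of z'] by simp
    also have "\<dots> = v"
      using u v \<gamma>.R.deg.R.a_comm[of v "\<ominus>\<^bsub>deg0 (mid \<gamma>)\<^esub> fst h u"]
      by (simp add: t_def a_minus_def \<gamma>.R.deg.R.r_neg2)
    finally show "v \<in> fst h ` carrier (deg0 (mid \<beta>))"
      by (rule rev_image_eqI[OF closed sym])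
  qed
  ultimately show ?thesis
    by (simp add: bij_betw_def)
qed

lemma adm_corr_mor_iso:
  assumes R1: "dgring R1" and R2: "dgring R2"
    and \<beta>: "is_adm_corr R1 R2 \<beta>" and \<gamma>: "is_adm_corr R1 R2 \<gamma>" and h: "corr_mor R1 R2 \<beta> \<gamma> h"
  shows "corr_iso R1 R2 \<beta> \<gamma> h"
proof -
  interpret h: dg_iso "mid \<beta>" "mid \<gamma>" h
    using corr_morD(1)[OF h] adm_corr_mor_bij0[OF assms] adm_corr_mor_bij1[OF \<beta> \<gamma> h]
    by (simp add: dg_iso_def dg_iso_axioms_def)
  let ?k = "dg_inv (mid \<beta>) (mid \<gamma>) h"
  have corr: "is_corr R1 R2 \<beta>" "is_corr R1 R2 \<gamma>"
    using \<beta> \<gamma> by (simp_all add: is_adm_corr_def)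
  then have ext: "fst (lft \<gamma>) \<in> extensional (carrier (deg0 (mid \<gamma>)))"
    "snd (lft \<gamma>) \<in> extensional (carrier (deg1 (mid \<gamma>)))"
    "fst (rgt \<gamma>) \<in> extensional (carrier (deg0 (mid \<gamma>)))"
    "snd (rgt \<gamma>) \<in> extensional (carrier (deg1 (mid \<gamma>)))"
    by (simp_all add: is_corr_def dg_hom_def)
  have "corr_mor R1 R2 \<gamma> \<beta> ?k"
    unfolding corr_mor_def
  proof (intro conjI corr h.dg_hom_inv)
    show "dg_comp (mid \<gamma>) (lft \<beta>) ?k = lft \<gamma>"
      unfolding dg_comp_eq_iff[OF ext(1,2)] by (simp add: corr_morD(2,3)[OF h, symmetric])
    show "dg_comp (mid \<gamma>) (rgt \<beta>) ?k = rgt \<gamma>"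
      unfolding dg_comp_eq_iff[OF ext(3,4)] by (simp add: corr_morD(4,5)[OF h, symmetric])
  qed
  then show ?thesis
    unfolding corr_iso_def using h h.dg_comp_inv_left h.dg_comp_inv_right by blast
qed

lemma corr_mor_graph_corr_iff:
  assumes R1: "dgring R1" and \<alpha>: "is_corr R1 R2 \<alpha>" and \<phi>: "dg_hom R1 R2 \<phi>"
  shows "corr_mor R1 R2 (graph_corr R1 \<phi>) \<alpha> s \<longleftrightarrow>
           s \<in> dg_sections (mid \<alpha>) R1 (lft \<alpha>) \<and> dg_comp R1 (rgt \<alpha>) s = \<phi>"
  using assms dg_ring.dg_hom_id[OF dg_ring.intro[OF R1]]
  by (auto simp: corr_mor_def is_corr_def graph_corr_def dg_sections_def)

lemma bij_betw_Sigma_fibres: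
  assumes F: "\<And>a. a \<in> I \<Longrightarrow> bij_betw (F a) (B a) {y \<in> Y. g y = a}"
    and g: "\<And>y. y \<in> Y \<Longrightarrow> g y \<in> I"
  shows "bij_betw (\<lambda>(a, x). F a x) (Sigma I B) Y"
proof (rule bij_betw_imageI)
  show "inj_on (\<lambda>(a, x). F a x) (Sigma I B)"
  proof (rule inj_onI, clarsimp)
    fix a x b x' assume a: "a \<in> I" "x \<in> B a" and b: "b \<in> I" "x' \<in> B b" and eq: "F a x = F b x'"
    have "g (F a x) = a" "g (F b x') = b"
      using bij_betwE[OF F[OF a(1)]] bij_betwE[OF F[OF b(1)]] a(2) b(2) by auto
    with eq have "a = b" by simp
    with a b eq show "a = b \<and> x = x'"
      using F[OF a(1)] by (auto simp: bij_betw_def inj_on_def)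
  qed
  show "(\<lambda>(a, x). F a x) ` Sigma I B = Y"
  proof (intro equalityI subsetI)
    fix y assume "y \<in> (\<lambda>(a, x). F a x) ` Sigma I B"
    then show "y \<in> Y"
      using F by (auto dest: bij_betwE)
  next
    fix y assume y: "y \<in> Y"
    then have "y \<in> F (g y) ` B (g y)"
      using F[OF g[OF y]] by (simp add: bij_betw_def)
    then show "y \<in> (\<lambda>(a, x). F a x) ` Sigma I B"
      using g[OF y] by force
  qed
qed

lemma bij_betw_adm_isos_sections:
  fixes \<alpha> :: "('m0, 'm1, 'a0, 'a1, 'b0, 'b1) corr"
  assumes R1: "dgring R1" and R2: "dgring R2" and \<alpha>: "is_adm_corr R1 R2 \<alpha>"
    and \<phi>: "dg_hom R1 R2 \<phi>"
    and adm: "is_admissibilization R1 R2 (graph_corr R1 \<phi>) A \<eta> TYPE(('m0, 'm1, 'a0, 'a1, 'b0, 'b1) corr)"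
  shows "bij_betw (\<lambda>\<iota>. dg_comp R1 \<iota> \<eta>) {\<iota>. corr_iso R1 R2 A \<alpha> \<iota>}
           {s \<in> dg_sections (mid \<alpha>) R1 (lft \<alpha>). dg_comp R1 (rgt \<alpha>) s = \<phi>}"
proof -
  have "is_adm_corr R1 R2 A"
    using adm by (simp add: is_admissibilization_def)
  then have "{\<iota>. corr_iso R1 R2 A \<alpha> \<iota>} = {\<iota>. corr_mor R1 R2 A \<alpha> \<iota>}"
    using adm_corr_mor_iso[OF R1 R2 _ \<alpha>] unfolding corr_iso_def by blast
  moreover have "{s \<in> dg_sections (mid \<alpha>) R1 (lft \<alpha>). dg_comp R1 (rgt \<alpha>) s = \<phi>} =
      {s. corr_mor R1 R2 (graph_corr R1 \<phi>) \<alpha> s}"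
    using corr_mor_graph_corr_iff[OF R1 _ \<phi>] \<alpha> by (auto simp: is_adm_corr_def)
  moreover have "bij_betw (\<lambda>\<iota>. dg_comp R1 \<iota> \<eta>) {\<iota>. corr_mor R1 R2 A \<alpha> \<iota>}
      {s. corr_mor R1 R2 (graph_corr R1 \<phi>) \<alpha> s}"
    using adm \<alpha> unfolding is_admissibilization_def adm_universal_at_def graph_corr_def by simp
  ultimately show ?thesis
    by simp
qed

theorem lemma4p3p6:
  fixes R1 :: "('a0, 'a1) dgr" and R2 :: "('b0, 'b1) dgr"
    and \<alpha> :: "('m0, 'm1, 'a0, 'a1, 'b0, 'b1) corr"
    and A :: "('a0, 'a1, 'b0, 'b1) dgmap \<Rightarrow> ('n0, 'n1, 'a0, 'a1, 'b0, 'b1) corr"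
    and \<eta> :: "('a0, 'a1, 'b0, 'b1) dgmap \<Rightarrow> ('a0, 'a1, 'n0, 'n1) dgmap"
  assumes R1: "dgring R1" and R2: "dgring R2"
    and \<alpha>: "is_adm_corr R1 R2 \<alpha>"
    and adm: "\<And>\<phi>. dg_hom R1 R2 \<phi> \<Longrightarrow>
        is_admissibilization R1 R2 (graph_corr R1 \<phi>) (A \<phi>) (\<eta> \<phi>)
          TYPE(('m0, 'm1, 'a0, 'a1, 'b0, 'b1) corr)"
  shows "bij_betw (\<lambda>(\<phi>, \<iota>). dg_comp R1 \<iota> (\<eta> \<phi>))
           {(\<phi>, \<iota>). dg_hom R1 R2 \<phi> \<and> corr_iso R1 R2 (A \<phi>) \<alpha> \<iota>}
           {s. dg_hom R1 (mid \<alpha>) s \<and> dg_comp R1 (lft \<alpha>) s = dg_id R1}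
       \<and> (\<forall>(\<phi>, \<iota>) \<in> {(\<phi>, \<iota>). dg_hom R1 R2 \<phi> \<and> corr_iso R1 R2 (A \<phi>) \<alpha> \<iota>}.
            \<phi> = dg_comp R1 (rgt \<alpha>) (dg_comp R1 \<iota> (\<eta> \<phi>)))
       \<and> bij_betw fst
           {s. dg_hom R1 (mid \<alpha>) s \<and> dg_comp R1 (lft \<alpha>) s = dg_id R1}
           {\<sigma>. \<sigma> \<in> ring_hom (deg0 R1) (deg0 (mid \<alpha>)) \<and>
                \<sigma> \<in> extensional (carrier (deg0 R1)) \<and>
                compose (carrier (deg0 R1)) (fst (lft \<alpha>)) \<sigma> = (\<lambda>x\<in>carrier (deg0 R1). x)}"
proof -
  interpret \<alpha>: surj_quasi_iso "mid \<alpha>" R1 "lft \<alpha>"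
    by (rule adm_corr_surj_quasi_iso[OF R1 R2 \<alpha>])
  let ?isos = "\<lambda>\<phi>. {\<iota>. corr_iso R1 R2 (A \<phi>) \<alpha> \<iota>}"
  note fibre = bij_betw_adm_isos_sections[OF R1 R2 \<alpha> _ adm]
  have g: "dg_morphism (mid \<alpha>) R2 (rgt \<alpha>)"
    using \<alpha> is_corr_morphisms(2)[OF _ R1 R2] unfolding is_adm_corr_def by blast
  have "dg_hom R1 R2 (dg_comp R1 (rgt \<alpha>) s)" if "s \<in> dg_sections (mid \<alpha>) R1 (lft \<alpha>)" for s
    by (rule dg_hom_comp[OF g \<alpha>.dg_sectionD(1)[OF that]])
  then have "bij_betw (\<lambda>(\<phi>, \<iota>). dg_comp R1 \<iota> (\<eta> \<phi>)) (Sigma {\<phi>. dg_hom R1 R2 \<phi>} ?isos)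
      (dg_sections (mid \<alpha>) R1 (lft \<alpha>))"
    using fibre by (intro bij_betw_Sigma_fibres) auto
  moreover have "\<forall>(\<phi>, \<iota>) \<in> Sigma {\<phi>. dg_hom R1 R2 \<phi>} ?isos.
      \<phi> = dg_comp R1 (rgt \<alpha>) (dg_comp R1 \<iota> (\<eta> \<phi>))"
    using bij_betw_apply[OF fibre] by fastforce
  moreover note \<alpha>.bij_betw_fst_dg_sections
  moreover have "Sigma {\<phi>. dg_hom R1 R2 \<phi>} ?isos = {(\<phi>, \<iota>). dg_hom R1 R2 \<phi> \<and> corr_iso R1 R2 (A \<phi>) \<alpha> \<iota>}"
    by auto
  ultimately show ?thesis
    unfolding dg_sections_def ring_sections_def by simp
qed

end
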